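(* Let $\alpha>0$ have continued fraction $[a_0;a_1,a_2,\ldots]$ with convergents $p_k/q_k$, and let $k\ge0$ be such that $a_{k+1}$ exists. Suppose $q_k=nq_k'$ with $n\in\mathbb{N}$ and $q_k'\in\mathbb{N}$, $q_k'>1$. Then $B(n\alpha)\ge n\,a_{k+1}$. Moreover, $\frac{p_k}{q_k'}$ is a convergent of $n\alpha$.
   Context: Convergents: $p_{-1}=1,q_{-1}=0,p_0=a_0,q_0=1$, $p_k=a_kp_{k-1}+p_{k-2}$, $q_k=a_kq_{k-1}+q_{k-2}$. $B(x)=\sup_{k\ge1}b_k$ where $x=[b_0;b_1,\ldots]$ (for rational $x$, a convergent is understood with respect to either of its finite expansions). *)

theory Defs
  imports Complex_Main "HOL-Library.Extended_Nat"
begin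

text \<open>For rational x this is the
  canonical finite expansion (last partial quotient at least 2 unless it is a_0).\<close>

fun cf_rem :: "real \<Rightarrow> nat \<Rightarrow> real" where
  "cf_rem x 0 = x"
| "cf_rem x (Suc n) = 1 / frac (cf_rem x n)"

definition cf_defined :: "real \<Rightarrow> nat \<Rightarrow> bool" where
  "cf_defined x n \<longleftrightarrow> (\<forall>i<n. cf_rem x i \<notin> \<int>)"

definition cf_a :: "real \<Rightarrow> nat \<Rightarrow> int" where
  "cf_a x n = \<lfloor>cf_rem x n\<rfloor>"

fun cf_p :: "real \<Rightarrow> nat \<Rightarrow> int" where
  "cf_p x 0 = cf_a x 0"
| "cf_p x (Suc 0) = cf_a x 1 * cf_a x 0 + 1"
| "cf_p x (Suc (Suc n)) = cf_a x (n + 2) * cf_p x (Suc n) + cf_p x n"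

fun cf_q :: "real \<Rightarrow> nat \<Rightarrow> int" where
  "cf_q x 0 = 1"
| "cf_q x (Suc 0) = cf_a x 1"
| "cf_q x (Suc (Suc n)) = cf_a x (n + 2) * cf_q x (Suc n) + cf_q x n"

definition cf_p_prev :: "real \<Rightarrow> nat \<Rightarrow> int" where
  "cf_p_prev x k = (if k = 0 then 1 else cf_p x (k - 1))"

definition cf_q_prev :: "real \<Rightarrow> nat \<Rightarrow> int" where
  "cf_q_prev x k = (if k = 0 then 0 else cf_q x (k - 1))"

text \<open>r is a convergent of x: either a convergent of the canonical expansion, or
  (for rational x = [b_0; ..., b_m] canonical) the extra convergent
  [b_0; ..., b_(m-1), b_m - 1] = (p_m - p_(m-1)) / (q_m - q_(m-1)) of the other finite
  expansion [b_0; ..., b_m - 1, 1].\<close>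
definition is_cf_convergent :: "real \<Rightarrow> real \<Rightarrow> bool" where
  "is_cf_convergent x r \<longleftrightarrow>
     (\<exists>j. cf_defined x j \<and> r = real_of_int (cf_p x j) / real_of_int (cf_q x j))
   \<or> (\<exists>m. cf_defined x m \<and> cf_rem x m \<in> \<int> \<and>
          r = real_of_int (cf_p x m - cf_p_prev x m) / real_of_int (cf_q x m - cf_q_prev x m))"

definition cf_B :: "real \<Rightarrow> enat" where
  "cf_B x = (SUP k \<in> {k. 1 \<le> k \<and> cf_defined x k}. enat (nat (cf_a x k)))"

end

theory Submission
  imports Defs
begin

text \<open>Since \<open>p\<^sub>k/q\<^sub>k\<close> is in lowest terms, so is \<open>p\<^sub>k/q'\<close>. Of its two finite continued fraction
  expansions \<open>[c\<^sub>0; \<dots>, c\<^sub>j]\<close>, choose the one with \<open>j \<equiv> k (mod 2)\<close>; its penultimate denominator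
  \<open>Q\<^sub>j\<^sub>-\<^sub>1\<close> lies in \<open>[0, q')\<close>. Comparing the determinant identities of the two expansions shows that
  \<open>q'\<close> divides \<open>D = q\<^sub>k\<^sub>-\<^sub>1 - Q\<^sub>j\<^sub>-\<^sub>1\<close>, and \<open>D > -q'\<close> forces \<open>D \<ge> 0\<close>. Writing
  \<open>\<alpha> = (p\<^sub>k r + p\<^sub>k\<^sub>-\<^sub>1) / (q\<^sub>k r + q\<^sub>k\<^sub>-\<^sub>1)\<close> with the complete quotient \<open>r = r\<^sub>k\<^sub>+\<^sub>1\<close>, one gets
  \<open>n\<alpha> = (p\<^sub>k w + P\<^sub>j\<^sub>-\<^sub>1) / (q' w + Q\<^sub>j\<^sub>-\<^sub>1)\<close> with \<open>w = n r + D/q' \<ge> n r > 1\<close>. Hence the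
  expansion of \<open>n\<alpha>\<close> begins with \<open>c\<^sub>0, \<dots>, c\<^sub>j\<close>, making \<open>p\<^sub>k/q'\<close> a convergent, and its next
  partial quotient is \<open>\<lfloor>w\<rfloor> \<ge> n a\<^sub>k\<^sub>+\<^sub>1\<close>.\<close>

fun conv_num :: "(nat \<Rightarrow> int) \<Rightarrow> nat \<Rightarrow> int" where
  "conv_num b 0 = b 0"
| "conv_num b (Suc 0) = b 1 * b 0 + 1"
| "conv_num b (Suc (Suc n)) = b (n + 2) * conv_num b (Suc n) + conv_num b n"

fun conv_den :: "(nat \<Rightarrow> int) \<Rightarrow> nat \<Rightarrow> int" where
  "conv_den b 0 = 1"
| "conv_den b (Suc 0) = b 1"
| "conv_den b (Suc (Suc n)) = b (n + 2) * conv_den b (Suc n) + conv_den b n"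

definition conv_num_prev :: "(nat \<Rightarrow> int) \<Rightarrow> nat \<Rightarrow> int" where
  "conv_num_prev b k = (if k = 0 then 1 else conv_num b (k - 1))"

definition conv_den_prev :: "(nat \<Rightarrow> int) \<Rightarrow> nat \<Rightarrow> int" where
  "conv_den_prev b k = (if k = 0 then 0 else conv_den b (k - 1))"

text \<open>The value \<open>[b\<^sub>0; b\<^sub>1, \<dots>, b\<^sub>k, w]\<close> of a continued fraction with real last entry \<open>w\<close>.\<close>

definition conv_moebius :: "(nat \<Rightarrow> int) \<Rightarrow> nat \<Rightarrow> real \<Rightarrow> real" where
  "conv_moebius b k w =
     (of_int (conv_num b k) * w + of_int (conv_num_prev b k)) /
     (of_int (conv_den b k) * w + of_int (conv_den_prev b k))"

lemma conv_num_prev_Suc [simp]: "conv_num_prev b (Suc k) = conv_num b k"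
  by (simp add: conv_num_prev_def)

lemma conv_den_prev_Suc [simp]: "conv_den_prev b (Suc k) = conv_den b k"
  by (simp add: conv_den_prev_def)

lemma conv_num_Suc: "conv_num b (Suc k) = b (Suc k) * conv_num b k + conv_num_prev b k"
  by (cases k) (auto simp: conv_num_prev_def numeral_2_eq_2)

lemma conv_den_Suc: "conv_den b (Suc k) = b (Suc k) * conv_den b k + conv_den_prev b k"
  by (cases k) (auto simp: conv_den_prev_def numeral_2_eq_2)

lemma conv_num_cong: "(\<And>i. i \<le> k \<Longrightarrow> b i = c i) \<Longrightarrow> conv_num b k = conv_num c k"
  by (induction b k rule: conv_num.induct) auto

lemma conv_den_cong: "(\<And>i. i \<le> k \<Longrightarrow> b i = c i) \<Longrightarrow> conv_den b k = conv_den c k"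
  by (induction b k rule: conv_den.induct) auto

lemma cf_p_conv_num: "cf_p x k = conv_num (cf_a x) k"
  by (induction x k rule: cf_p.induct) auto

lemma cf_q_conv_den: "cf_q x k = conv_den (cf_a x) k"
  by (induction x k rule: cf_q.induct) auto

lemma cf_p_prev_conv_num_prev: "cf_p_prev x k = conv_num_prev (cf_a x) k"
  by (simp add: cf_p_prev_def conv_num_prev_def cf_p_conv_num)

lemma cf_q_prev_conv_den_prev: "cf_q_prev x k = conv_den_prev (cf_a x) k"
  by (simp add: cf_q_prev_def conv_den_prev_def cf_q_conv_den)

lemma conv_det:
  "conv_num b k * conv_den_prev b k - conv_num_prev b k * conv_den b k = (-1) ^ (k + 1)"
proof (induction k)
  case 0
  then show ?case by (simp add: conv_num_prev_def conv_den_prev_def)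
next
  case (Suc k)
  have "conv_num b (Suc k) * conv_den_prev b (Suc k) - conv_num_prev b (Suc k) * conv_den b (Suc k)
      = - (conv_num b k * conv_den_prev b k - conv_num_prev b k * conv_den b k)"
    by (simp add: conv_num_Suc conv_den_Suc algebra_simps)
  with Suc show ?case by simp
qed

lemma coprime_conv: "coprime (conv_num b k) (conv_den b k)"
proof (rule coprimeI)
  fix e assume "e dvd conv_num b k" "e dvd conv_den b k"
  then have "e dvd conv_num b k * conv_den_prev b k - conv_num_prev b k * conv_den b k"
    by simp
  then have "e dvd (-1) ^ (k + 1)"
    by (simp only: conv_det)
  then show "is_unit e"
    by (rule dvd_unit_imp_unit) (simp add: is_unit_power_iff)
qed

lemma conv_den_bounds:
  assumes "\<And>i. 1 \<le> i \<Longrightarrow> i \<le> k \<Longrightarrow> b i \<ge> 1"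
  shows "conv_den b k \<ge> 1" "0 \<le> conv_den_prev b k" "conv_den_prev b k \<le> conv_den b k"
proof -
  have "conv_den b k \<ge> 1 \<and> 0 \<le> conv_den_prev b k \<and> conv_den_prev b k \<le> conv_den b k"
    using assms
  proof (induction k)
    case 0
    then show ?case by (simp add: conv_den_prev_def)
  next
    case (Suc k)
    then have "conv_den b k \<ge> 1" "conv_den_prev b k \<ge> 0" "b (Suc k) \<ge> 1"
      by auto
    moreover from this have "b (Suc k) * conv_den b k \<ge> conv_den b k"
      using mult_right_mono[of 1 "b (Suc k)" "conv_den b k"] by simp
    ultimately show ?case
      unfolding conv_den_Suc conv_den_prev_Suc by linarith
  qed
  then show "conv_den b k \<ge> 1" "0 \<le> conv_den_prev b k" "conv_den_prev b k \<le> conv_den b k"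
    by auto
qed

lemma conv_moebius_Suc:
  assumes "w \<noteq> 0"
  shows "conv_moebius b (Suc k) w = conv_moebius b k (of_int (b (Suc k)) + 1 / w)"
proof -
  have num: "of_int (conv_num b (Suc k)) * w + of_int (conv_num_prev b (Suc k))
      = w * (of_int (conv_num b k) * (of_int (b (Suc k)) + 1 / w) + of_int (conv_num_prev b k))"
    using assms by (simp add: conv_num_Suc algebra_simps)
  have den: "of_int (conv_den b (Suc k)) * w + of_int (conv_den_prev b (Suc k))
      = w * (of_int (conv_den b k) * (of_int (b (Suc k)) + 1 / w) + of_int (conv_den_prev b k))"
    using assms by (simp add: conv_den_Suc algebra_simps)
  show ?thesis
    unfolding conv_moebius_def num den using assms by simp
qed

lemma conv_moebius_next:
  "conv_moebius b k (of_int (b (Suc k))) = of_int (conv_num b (Suc k)) / of_int (conv_den b (Suc k))"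
  by (simp add: conv_moebius_def conv_num_Suc conv_den_Suc algebra_simps)

lemma conv_num_prev_cong: "(\<And>i. i < k \<Longrightarrow> b i = c i) \<Longrightarrow> conv_num_prev b k = conv_num_prev c k"
  by (cases k) (auto simp: conv_num_prev_def intro: conv_num_cong)

lemma conv_den_prev_cong: "(\<And>i. i < k \<Longrightarrow> b i = c i) \<Longrightarrow> conv_den_prev b k = conv_den_prev c k"
  by (cases k) (auto simp: conv_den_prev_def intro: conv_den_cong)

lemma conv_num_update_last:
  "conv_num (b(k := x)) k = conv_num b k + (x - b k) * conv_num_prev b k"
proof (cases k)
  case (Suc m)
  then have "conv_num (b(k := x)) m = conv_num b m" "conv_num_prev (b(k := x)) m = conv_num_prev b m"
    by (auto intro: conv_num_cong conv_num_prev_cong)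
  with Suc show ?thesis
    by (simp add: conv_num_Suc algebra_simps)
qed (simp add: conv_num_prev_def)

lemma conv_den_update_last:
  "conv_den (b(k := x)) k = conv_den b k + (x - b k) * conv_den_prev b k"
proof (cases k)
  case (Suc m)
  then have "conv_den (b(k := x)) m = conv_den b m" "conv_den_prev (b(k := x)) m = conv_den_prev b m"
    by (auto intro: conv_den_cong conv_den_prev_cong)
  with Suc show ?thesis
    by (simp add: conv_den_Suc algebra_simps)
qed (simp add: conv_den_prev_def)

text \<open>Replacing the last entry \<open>b\<^sub>k\<close> by the two entries \<open>b\<^sub>k - 1, 1\<close> gives the other expansion of the
  same rational number.\<close>

lemma conv_split_last:
  assumes b': "b' = b(k := b k - 1, Suc k := 1)"
  shows "conv_num b' (Suc k) = conv_num b k" "conv_den b' (Suc k) = conv_den b k"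
    and "conv_den_prev b' (Suc k) = conv_den b k - conv_den_prev b k"
proof -
  have "conv_num b' k = conv_num (b(k := b k - 1)) k" "conv_den b' k = conv_den (b(k := b k - 1)) k"
    by (auto intro: conv_num_cong conv_den_cong simp: b')
  moreover have "conv_num_prev b' k = conv_num_prev b k" "conv_den_prev b' k = conv_den_prev b k"
    by (auto intro: conv_num_prev_cong conv_den_prev_cong simp: b')
  moreover have "b' (Suc k) = 1"
    by (simp add: b')
  ultimately show "conv_num b' (Suc k) = conv_num b k" "conv_den b' (Suc k) = conv_den b k"
    "conv_den_prev b' (Suc k) = conv_den b k - conv_den_prev b k"
    by (simp_all add: conv_num_Suc conv_den_Suc conv_num_update_last conv_den_update_last)
qed

lemma cf_defined_mono: "cf_defined x m \<Longrightarrow> i \<le> m \<Longrightarrow> cf_defined x i"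
  by (auto simp: cf_defined_def)

lemma cf_rem_Suc_gt_1:
  assumes "cf_defined x (Suc i)"
  shows "cf_rem x (Suc i) > 1"
proof -
  from assms have "cf_rem x i \<notin> \<int>"
    by (simp add: cf_defined_def)
  then have "0 < frac (cf_rem x i)" "frac (cf_rem x i) < 1"
    by (simp_all add: frac_gt_0_iff frac_lt_1)
  then show ?thesis
    by simp
qed

lemma cf_a_ge_1:
  assumes "cf_defined x m" "1 \<le> i" "i \<le> m"
  shows "cf_a x i \<ge> 1"
proof -
  obtain i' where i': "i = Suc i'"
    using assms(2) by (cases i) auto
  have "cf_rem x i > 1"
    using cf_rem_Suc_gt_1[of x i'] cf_defined_mono[OF assms(1)] assms(3) i' by simp
  then show ?thesis
    unfolding cf_a_def by linarith
qed

lemma cf_q_bounds: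
  assumes "cf_defined x k"
  shows "cf_q x k \<ge> 1" "cf_q_prev x k \<ge> 0"
  using conv_den_bounds(1,2)[of k "cf_a x"] cf_a_ge_1[OF assms]
  by (simp_all add: cf_q_conv_den cf_q_prev_conv_den_prev)

lemma cf_a_le_cf_B: "cf_defined x i \<Longrightarrow> 1 \<le> i \<Longrightarrow> enat (nat (cf_a x i)) \<le> cf_B x"
  unfolding cf_B_def by (rule SUP_upper) simp

lemma cf_eq_conv_moebius:
  assumes "cf_defined x (Suc k)"
  shows "x = conv_moebius (cf_a x) k (cf_rem x (Suc k))"
  using assms
proof (induction k)
  case 0
  then have "frac x > 0"
    by (simp add: cf_defined_def frac_gt_0_iff)
  moreover have "x = of_int (cf_a x 0) + frac x"
    by (simp add: cf_a_def frac_def)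
  ultimately show ?case
    by (simp add: conv_moebius_def conv_num_prev_def conv_den_prev_def field_simps)
next
  case (Suc k)
  then have "frac (cf_rem x (Suc k)) > 0"
    by (simp add: cf_defined_def frac_gt_0_iff del: cf_rem.simps)
  then have "cf_rem x (Suc k) = of_int (cf_a x (Suc k)) + 1 / cf_rem x (Suc (Suc k))"
    and "cf_rem x (Suc (Suc k)) \<noteq> 0"
    by (simp_all add: cf_a_def frac_def)
  moreover have "x = conv_moebius (cf_a x) k (cf_rem x (Suc k))"
    using Suc cf_defined_mono by fastforce
  ultimately show ?case
    by (metis conv_moebius_Suc)
qed

lemma floor_plus_inverse:
  fixes w :: real
  assumes "w > 1"
  shows "\<lfloor>of_int c + 1 / w\<rfloor> = c" and "frac (of_int c + 1 / w) = 1 / w"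
    and "of_int c + 1 / w \<notin> \<int>"
proof -
  have "0 < 1 / w" "1 / w < 1"
    using assms by auto
  then show "\<lfloor>of_int c + 1 / w\<rfloor> = c"
    by (simp add: floor_unique)
  then show frac: "frac (of_int c + 1 / w) = 1 / w"
    by (simp add: frac_def)
  show "of_int c + 1 / w \<notin> \<int>"
    using \<open>0 < 1 / w\<close> frac by (metis frac_gt_0_iff)
qed

lemma cf_of_conv_moebius:
  assumes "\<And>i. 1 \<le> i \<Longrightarrow> i \<le> k \<Longrightarrow> b i \<ge> 1" "w > 1"
  shows "\<forall>i\<le>k. cf_a (conv_moebius b k w) i = b i"
    and "cf_defined (conv_moebius b k w) (Suc k)"
    and "cf_rem (conv_moebius b k w) (Suc k) = w"
proof -
  have "(\<forall>i\<le>k. cf_a y i = b i) \<and> cf_defined y (Suc k) \<and> cf_rem y (Suc k) = w"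
    if "y = conv_moebius b k w" for y
    using assms that
  proof (induction k arbitrary: w)
    case 0
    then have "y = of_int (b 0) + 1 / w"
      by (simp add: conv_moebius_def conv_num_prev_def conv_den_prev_def field_simps)
    with floor_plus_inverse[OF 0(2), of "b 0"] show ?case
      by (simp add: cf_a_def cf_defined_def)
  next
    case (Suc k)
    define w' where "w' = of_int (b (Suc k)) + 1 / w"
    have "real_of_int (b (Suc k)) \<ge> 1" "1 / w > 0"
      using Suc.prems by auto
    then have "w' > 1"
      unfolding w'_def by linarith
    moreover have "y = conv_moebius b k w'"
      using Suc.prems conv_moebius_Suc[of w b k] by (simp add: w'_def)
    ultimately have IH: "\<forall>i\<le>k. cf_a y i = b i" "cf_defined y (Suc k)" "cf_rem y (Suc k) = w'"
      using Suc.IH[of w'] Suc.prems by auto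
    note w' = floor_plus_inverse[OF Suc.prems(2), of "b (Suc k)", folded w'_def]
    have "cf_a y (Suc k) = b (Suc k)"
      using IH w' by (simp add: cf_a_def)
    moreover have "cf_defined y (Suc (Suc k))"
      using IH(2,3) w' unfolding cf_defined_def by (auto simp del: cf_rem.simps simp: less_Suc_eq)
    moreover have "cf_rem y (Suc (Suc k)) = w"
      using IH w' Suc.prems(2) by simp
    ultimately show ?case
      using IH(1) le_Suc_eq by auto
  qed
  then show "\<forall>i\<le>k. cf_a (conv_moebius b k w) i = b i"
    and "cf_defined (conv_moebius b k w) (Suc k)"
    and "cf_rem (conv_moebius b k w) (Suc k) = w"
    by blast+
qed

lemma is_cf_convergent_conv_moebius:
  assumes "\<And>i. 1 \<le> i \<Longrightarrow> i \<le> k \<Longrightarrow> b i \<ge> 1" "w > 1"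
  shows "is_cf_convergent (conv_moebius b k w) (of_int (conv_num b k) / of_int (conv_den b k))"
proof -
  note cf = cf_of_conv_moebius[OF assms]
  have "cf_p (conv_moebius b k w) k = conv_num b k" "cf_q (conv_moebius b k w) k = conv_den b k"
    using cf(1) by (auto simp: cf_p_conv_num cf_q_conv_den intro: conv_num_cong conv_den_cong)
  moreover have "cf_defined (conv_moebius b k w) k"
    using cf_defined_mono[OF cf(2), of k] by simp
  ultimately show ?thesis
    unfolding is_cf_convergent_def by (intro disjI1 exI[of _ k]) simp
qed

lemma cf_a_conv_moebius_Suc:
  assumes "\<And>i. 1 \<le> i \<Longrightarrow> i \<le> k \<Longrightarrow> b i \<ge> 1" "w > 1"
  shows "cf_a (conv_moebius b k w) (Suc k) = \<lfloor>w\<rfloor>"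
  unfolding cf_a_def using cf_of_conv_moebius(3)[OF assms] by (simp del: cf_rem.simps)

lemma cf_rem_Suc_shift: "cf_rem x (Suc m) = cf_rem (cf_rem x 1) m"
  by (induction m) auto

lemma cf_defined_Suc_iff: "cf_defined x (Suc m) \<longleftrightarrow> x \<notin> \<int> \<and> cf_defined (cf_rem x 1) m"
  unfolding cf_defined_def All_less_Suc2 by (simp only: cf_rem_Suc_shift cf_rem.simps(1))

lemma rational_cf_terminates:
  fixes d :: nat
  assumes "d > 0"
  shows "\<exists>m. cf_defined (of_int c / of_nat d) m \<and> cf_rem (of_int c / of_nat d) m \<in> \<int>"
  using assms
proof (induction d arbitrary: c rule: less_induct)
  case (less d)
  define x where "x = (of_int c / of_nat d :: real)"
  show ?case
  proof (cases "x \<in> \<int>")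
    case True
    then show ?thesis
      by (auto simp: x_def cf_defined_def)
  next
    case False
    define e where "e = c mod int d"
    have "\<lfloor>x\<rfloor> = c div int d"
      unfolding x_def by (metis floor_divide_of_int_eq of_int_of_nat_eq)
    moreover have "real_of_int c = real d * of_int (c div int d) + of_int e"
    proof -
      have "c = int d * (c div int d) + e"
        by (simp add: e_def)
      then have "real_of_int c = of_int (int d * (c div int d) + e)"
        by (rule arg_cong)
      then show ?thesis
        by simp
    qed
    ultimately have frac: "frac x = of_int e / of_nat d"
      using less.prems unfolding frac_def x_def by (simp add: field_simps)
    have "e \<noteq> 0"
      using False frac by (metis div_0 frac_eq_0_iff of_int_0)
    then have "0 < e" "e < int d"
      using less.prems by (simp_all add: e_def order_le_neq_trans)
    then have "nat e < d" "0 < nat e" "cf_rem x 1 = of_int (int d) / of_nat (nat e)"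
      using frac by simp_all
    then have "\<exists>m. cf_defined (cf_rem x 1) m \<and> cf_rem (cf_rem x 1) m \<in> \<int>"
      by (simp only: less.IH)
    then obtain m where "cf_defined (cf_rem x 1) m" "cf_rem (cf_rem x 1) m \<in> \<int>"
      by blast
    then have "cf_defined x (Suc m)" "cf_rem x (Suc m) \<in> \<int>"
      using False by (simp_all only: cf_defined_Suc_iff cf_rem_Suc_shift simp_thms)
    then show ?thesis
      unfolding x_def by blast
  qed
qed

lemma coprime_fractions_eq:
  fixes a b c d :: int
  assumes "coprime a b" "coprime c d" "b > 0" "d > 0"
    and "real_of_int a / real_of_int b = real_of_int c / real_of_int d"
  shows "a = c" "b = d"
proof -
  have "real_of_int (a * d) = real_of_int (c * b)"
    using assms(3-5) by (simp add: field_simps)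
  then have ad: "a * d = c * b"
    by (simp only: of_int_eq_iff)
  then have "b dvd d" "d dvd b"
    using assms(1,2) by (metis coprime_commute coprime_dvd_mult_right_iff dvd_triv_right)+
  then show "b = d"
    using assms(3,4) by (simp add: zdvd_antisym_nonneg)
  then show "a = c"
    using ad assms(4) by simp
qed

lemma coprime_fraction_cf:
  assumes "coprime p (int q)" "q > 1"
  obtains c m where "\<forall>i. 1 \<le> i \<longrightarrow> i \<le> Suc m \<longrightarrow> c i \<ge> 1" "c (Suc m) \<ge> 2"
    "conv_num c (Suc m) = p" "conv_den c (Suc m) = int q"
proof -
  define x where "x = real_of_int p / real q"
  obtain m where m: "cf_defined x m" "cf_rem x m \<in> \<int>"
    using rational_cf_terminates[of q p] assms(2) unfolding x_def by auto
  have "x \<notin> \<int>"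
  proof
    assume "x \<in> \<int>"
    then obtain z where "real_of_int p = real_of_int (z * int q)"
      using assms(2) by (auto simp: x_def field_simps elim: Ints_cases)
    then have "int q dvd p"
      by (simp only: of_int_eq_iff) simp
    then have "is_unit (int q)"
      using assms(1) by (metis coprime_absorb_left coprime_commute)
    then show False
      using assms(2) by simp
  qed
  with m obtain m' where m': "m = Suc m'"
    by (cases m) auto
  define c where "c = cf_a x"
  have c_pos: "\<forall>i. 1 \<le> i \<longrightarrow> i \<le> m \<longrightarrow> c i \<ge> 1"
    using cf_a_ge_1[OF m(1)] by (simp add: c_def)
  have "of_int (c m) = cf_rem x m"
    using m(2) unfolding c_def cf_a_def by (metis Ints_cases floor_of_int)
  moreover have "cf_rem x m > 1"
    using cf_rem_Suc_gt_1 m(1) m' by simp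
  ultimately have "c m \<ge> 2"
    by linarith
  have "x = conv_moebius c m' (of_int (c m))"
    using cf_eq_conv_moebius[of x m'] m m' \<open>of_int (c m) = cf_rem x m\<close> by (simp add: c_def)
  then have "of_int (conv_num c m) / of_int (conv_den c m) = real_of_int p / real_of_int (int q)"
    by (simp add: x_def conv_moebius_next m')
  moreover have "conv_den c m > 0"
    using conv_den_bounds(1)[of m c] c_pos by auto
  ultimately have "conv_num c m = p" "conv_den c m = int q"
    using coprime_fractions_eq[OF coprime_conv assms(1)] assms(2) by auto
  with c_pos \<open>c m \<ge> 2\<close> that show ?thesis
    unfolding m' by blast
qed

lemma coprime_fraction_cf_parity:
  assumes "coprime p (int q)" "q > 1"
  obtains b j where "\<And>i. 1 \<le> i \<Longrightarrow> i \<le> j \<Longrightarrow> b i \<ge> 1"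
    "conv_num b j = p" "conv_den b j = int q" "0 \<le> conv_den_prev b j" "conv_den_prev b j < int q"
    "even j \<longleftrightarrow> even k"
proof -
  obtain c m where c_pos: "\<forall>i. 1 \<le> i \<longrightarrow> i \<le> Suc m \<longrightarrow> c i \<ge> 1" and "c (Suc m) \<ge> 2"
    and num: "conv_num c (Suc m) = p" and den: "conv_den c (Suc m) = int q"
    using coprime_fraction_cf[OF assms] .
  have bounds: "conv_den c m \<ge> 1" "conv_den_prev c m \<ge> 0" "conv_den c m \<le> conv_den c (Suc m)"
    using conv_den_bounds[of m c] conv_den_bounds(3)[of "Suc m" c] c_pos by auto
  show ?thesis
  proof (cases "even (Suc m) \<longleftrightarrow> even k")
    case True
    have "2 * conv_den c m \<le> c (Suc m) * conv_den c m"
      using \<open>c (Suc m) \<ge> 2\<close> bounds(1) by (intro mult_right_mono) auto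
    then have "conv_den_prev c (Suc m) < int q"
      using bounds den unfolding conv_den_Suc conv_den_prev_Suc by linarith
    with True c_pos num den bounds(1) show ?thesis
      by (intro that[where b = c and j = "Suc m"]) auto
  next
    case False
    define b where "b = c(Suc m := c (Suc m) - 1, Suc (Suc m) := 1)"
    note split = conv_split_last[OF b_def]
    have "\<forall>i. 1 \<le> i \<longrightarrow> i \<le> Suc (Suc m) \<longrightarrow> b i \<ge> 1"
      using c_pos \<open>c (Suc m) \<ge> 2\<close> by (auto simp: b_def le_Suc_eq)
    with False split bounds num den show ?thesis
      by (intro that[where b = b and j = "Suc (Suc m)"]) auto
  qed
qed

lemma nonneg_if_coprime_mult_eq:
  fixes p q d e :: int
  assumes "coprime p q" "p * d = q * e" "q > 0" "d > - q"
  shows "d \<ge> 0"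
proof -
  from assms(1,2) have "q dvd d"
    by (metis coprime_commute coprime_dvd_mult_right_iff dvd_triv_left)
  then obtain t where t: "d = q * t" ..
  with assms(4) have "q * (-1) < q * t"
    by simp
  with assms(3) have "t \<ge> 0"
    by (simp only: mult_less_cancel_left_pos)
  with assms(3) t show ?thesis
    by simp
qed

text \<open>Comparing the determinant identities of \<open>p\<^sub>k/q\<^sub>k\<close> and of the expansion \<open>b\<close> of \<open>p\<^sub>k/q\<close>, which have
  the same sign because \<open>j \<equiv> k (mod 2)\<close>.\<close>

lemma cf_det_compare:
  assumes q: "cf_q \<alpha> k = int n * int q" and num: "conv_num b j = cf_p \<alpha> k"
    and den: "conv_den b j = int q" and parity: "even j \<longleftrightarrow> even k"
  shows "cf_p \<alpha> k * (cf_q_prev \<alpha> k - conv_den_prev b j)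
    = int q * (int n * cf_p_prev \<alpha> k - conv_num_prev b j)"
proof -
  have "cf_p \<alpha> k * cf_q_prev \<alpha> k - cf_p_prev \<alpha> k * (int n * int q) = (-1) ^ (k + 1)"
    using conv_det[of "cf_a \<alpha>" k] q
    by (simp add: cf_p_conv_num cf_q_conv_den cf_p_prev_conv_num_prev cf_q_prev_conv_den_prev)
  moreover have "cf_p \<alpha> k * conv_den_prev b j - conv_num_prev b j * int q = (-1) ^ (k + 1)"
    using conv_det[of b j] parity num den by (simp add: minus_one_power_iff)
  ultimately show ?thesis
    by (simp add: algebra_simps)
qed

lemma scaled_cf_conv_moebius:
  assumes defined: "cf_defined \<alpha> (Suc k)" and q: "cf_q \<alpha> k = int n * int q"
    and num: "conv_num b j = cf_p \<alpha> k" and den: "conv_den b j = int q"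
    and prev: "0 \<le> conv_den_prev b j" "conv_den_prev b j < int q"
    and parity: "even j \<longleftrightarrow> even k"
  obtains w where "w \<ge> real n * cf_rem \<alpha> (Suc k)" "real n * \<alpha> = conv_moebius b j w"
proof -
  define r where "r = cf_rem \<alpha> (Suc k)"
  define p where "p = cf_p \<alpha> k"
  define pp where "pp = cf_p_prev \<alpha> k"
  define qq where "qq = cf_q_prev \<alpha> k"
  define d where "d = qq - conv_den_prev b j"
  have \<alpha>: "\<alpha> = (of_int p * r + of_int pp) / (of_int (int n * int q) * r + of_int qq)"
    using cf_eq_conv_moebius[OF defined] q
    by (simp add: conv_moebius_def r_def p_def pp_def qq_def cf_p_conv_num cf_q_conv_den
        cf_p_prev_conv_num_prev cf_q_prev_conv_den_prev)
  have key: "p * d = int q * (int n * pp - conv_num_prev b j)"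
    using cf_det_compare[OF q num den parity] by (simp add: p_def pp_def qq_def d_def)
  have "coprime p (int q)"
    using coprime_conv[of "cf_a \<alpha>" k] q by (simp add: p_def cf_p_conv_num cf_q_conv_den)
  moreover have "d > - int q"
    using cf_q_bounds(2)[OF cf_defined_mono[OF defined, of k]] prev by (simp add: d_def qq_def)
  ultimately have "d \<ge> 0"
    using nonneg_if_coprime_mult_eq key prev by simp
  define w where "w = real n * r + of_int d / real q"
  have q_pos: "real q > 0"
    using prev by simp
  have "of_int (conv_num b j) * w + of_int (conv_num_prev b j) = real n * (of_int p * r + of_int pp)"
    using q_pos arg_cong[OF key, of real_of_int]
    by (simp add: num w_def field_simps flip: p_def)
  moreover have "of_int (conv_den b j) * w + of_int (conv_den_prev b j)
      = of_int (int n * int q) * r + of_int qq"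
    using q_pos by (simp add: den w_def d_def field_simps)
  ultimately have "real n * \<alpha> = conv_moebius b j w"
    by (simp add: \<alpha> conv_moebius_def)
  moreover have "w \<ge> real n * r"
    using \<open>d \<ge> 0\<close> q_pos by (simp add: w_def)
  ultimately show ?thesis
    using that r_def by blast
qed

theorem proposition3p6:
  fixes \<alpha> :: real and k n q' :: nat
  assumes "\<alpha> > 0"
    and "cf_defined \<alpha> (k + 1)"
    and "cf_q \<alpha> k = int n * int q'"
    and "q' > 1"
  shows "cf_B (real n * \<alpha>) \<ge> enat (n * nat (cf_a \<alpha> (k + 1)))
     \<and> is_cf_convergent (real n * \<alpha>) (real_of_int (cf_p \<alpha> k) / real q')"
proof -
  have defined: "cf_defined \<alpha> (Suc k)"
    using assms(2) by simp
  have "coprime (cf_p \<alpha> k) (int q')"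
    using coprime_conv[of "cf_a \<alpha>" k] assms(3) by (simp add: cf_p_conv_num cf_q_conv_den)
  then obtain b j where b_pos: "\<And>i. 1 \<le> i \<Longrightarrow> i \<le> j \<Longrightarrow> b i \<ge> 1"
    and num: "conv_num b j = cf_p \<alpha> k" and den: "conv_den b j = int q'"
    and "0 \<le> conv_den_prev b j" "conv_den_prev b j < int q'" "even j \<longleftrightarrow> even k"
    using coprime_fraction_cf_parity[OF _ assms(4)] by metis
  then obtain w where w: "w \<ge> real n * cf_rem \<alpha> (Suc k)" and y: "real n * \<alpha> = conv_moebius b j w"
    using scaled_cf_conv_moebius[OF defined assms(3) num den] by metis
  have r: "cf_rem \<alpha> (Suc k) > 1"
    using cf_rem_Suc_gt_1[OF defined] .
  have "n \<ge> 1"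
    using cf_q_bounds(1)[OF cf_defined_mono[OF defined, of k]] assms(3) by (cases n) auto
  with r have "cf_rem \<alpha> (Suc k) \<le> real n * cf_rem \<alpha> (Suc k)"
    by (simp add: mult_le_cancel_right1 del: cf_rem.simps)
  with w r have "w > 1"
    by linarith
  have "int n * cf_a \<alpha> (Suc k) \<le> \<lfloor>real n * cf_rem \<alpha> (Suc k)\<rfloor>"
    using le_mult_floor[of "real n" "cf_rem \<alpha> (Suc k)"] r by (simp add: cf_a_def del: cf_rem.simps)
  also have "\<dots> \<le> cf_a (real n * \<alpha>) (Suc j)"
    using floor_mono[OF w] cf_a_conv_moebius_Suc[of j b, OF b_pos \<open>w > 1\<close>] y by simp
  finally have "n * nat (cf_a \<alpha> (k + 1)) \<le> nat (cf_a (real n * \<alpha>) (Suc j))"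
    by (metis Suc_eq_plus1 nat_int nat_mono nat_mult_distrib of_nat_0_le_iff)
  then have "enat (n * nat (cf_a \<alpha> (k + 1))) \<le> enat (nat (cf_a (real n * \<alpha>) (Suc j)))"
    by simp
  also have "\<dots> \<le> cf_B (real n * \<alpha>)"
    using cf_a_le_cf_B[OF cf_of_conv_moebius(2)[of j b, OF b_pos \<open>w > 1\<close>]] y by simp
  finally show ?thesis
    using is_cf_convergent_conv_moebius[of j b, OF b_pos \<open>w > 1\<close>] y num den by simp
qed

end
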